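(* Let $K$ be an unconstrained Sierpinski carpet, $d$ the Euclidean metric and $d_G$ the geodesic metric on $K$. There exists $C\in(0,\infty)$ depending only on $K$ such that $d(x,y)\le d_G(x,y)\le C\,d(x,y)$ for every $x,y\in K$.
   Context: USC: integers $k\ge3$, $4(k-1)\le N\le k^2-1$; maps $\Psi_i(x)=x/k+c_i$ on $\square=[0,1]^2$ with pairwise intersections of the $\Psi_i(\square)$ a segment, point or empty, $\bigcup_i\Psi_i(\square)$ connected and invariant under the 8 isometries of $\square$, $[0,1]\times\{0\}\subset\bigcup_i\Psi_i(\square)\subset\square$; $K=\bigcup_i\Psi_iK$. $d_G(x,y)$ is the infimum of lengths of rectifiable curves $\gamma:[0,1]\to K$ with $\gamma(0)=x$, $\gamma(1)=y$. *)

theory Defs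
  imports "HOL-Analysis.Analysis"
begin

type_synonym pt = "real \<times> real"

definition unit_square :: "pt set" where
  "unit_square = {0..1} \<times> {0..1}"

definition usc_map :: "nat \<Rightarrow> (nat \<Rightarrow> pt) \<Rightarrow> nat \<Rightarrow> pt \<Rightarrow> pt" where
  "usc_map k c i x = scaleR (1 / real k) x + c i"

definition square_isometries :: "(pt \<Rightarrow> pt) set" where
  "square_isometries =
    {(\<lambda>(x,y). (x,y)), (\<lambda>(x,y). (1-x,y)), (\<lambda>(x,y). (x,1-y)), (\<lambda>(x,y). (1-x,1-y)),
     (\<lambda>(x,y). (y,x)), (\<lambda>(x,y). (1-y,x)), (\<lambda>(x,y). (y,1-x)), (\<lambda>(x,y). (1-y,1-x))}"

definition is_segment :: "pt set \<Rightarrow> bool" where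
  "is_segment S \<longleftrightarrow> (\<exists>a b. a \<noteq> b \<and> S = closed_segment a b)"

text \<open>Unconstrained Sierpinski carpet data: k, N, translation vectors c_0..c_(N-1),
  and the attractor K (the unique nonempty compact set with K = U_i Psi_i(K)).\<close>
definition USC :: "nat \<Rightarrow> nat \<Rightarrow> (nat \<Rightarrow> pt) \<Rightarrow> pt set \<Rightarrow> bool" where
  "USC k N c K \<longleftrightarrow>
     k \<ge> 3 \<and> 4 * (k - 1) \<le> N \<and> N \<le> k^2 - 1 \<and>
     (\<forall>i<N. \<forall>j<N. i \<noteq> j \<longrightarrow>
        (let S = usc_map k c i ` unit_square \<inter> usc_map k c j ` unit_square
         in is_segment S \<or> (\<exists>p. S = {p}) \<or> S = {})) \<and>
     connected (\<Union>i<N. usc_map k c i ` unit_square) \<and>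
     (\<forall>g\<in>square_isometries. g ` (\<Union>i<N. usc_map k c i ` unit_square) = (\<Union>i<N. usc_map k c i ` unit_square)) \<and>
     {0..1} \<times> {0} \<subseteq> (\<Union>i<N. usc_map k c i ` unit_square) \<and>
     (\<Union>i<N. usc_map k c i ` unit_square) \<subseteq> unit_square \<and>
     compact K \<and> K \<noteq> {} \<and> K = (\<Union>i<N. usc_map k c i ` K)"

definition curve_length :: "(real \<Rightarrow> pt) \<Rightarrow> ereal" where
  "curve_length \<gamma> =
     (SUP p \<in> {(n, t). t 0 = 0 \<and> t n = (1::real) \<and> (\<forall>i<n. t i \<le> t (Suc i))}.
        ereal (\<Sum>i<fst p. dist (\<gamma> (snd p i)) (\<gamma> (snd p (Suc i)))))"

definition rectifiable_curve :: "(real \<Rightarrow> pt) \<Rightarrow> bool" where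
  "rectifiable_curve \<gamma> \<longleftrightarrow> path \<gamma> \<and> curve_length \<gamma> < \<infinity>"

text \<open>Geodesic (intrinsic) metric on K; infimum over the empty set is +infinity.\<close>
definition geodesic_dist :: "pt set \<Rightarrow> pt \<Rightarrow> pt \<Rightarrow> ereal" where
  "geodesic_dist K x y =
     (INF \<gamma> \<in> {\<gamma>. rectifiable_curve \<gamma> \<and> path_image \<gamma> \<subseteq> K \<and> pathstart \<gamma> = x \<and> pathfinish \<gamma> = y}.
        curve_length \<gamma>)"

end

theory Submission
  imports Defs
begin

(* Two points x, y of K are joined inside K by a path that is (C * dist x y)-Lipschitz on [0, 1],
   so its length is at most C * dist x y; the lower bound holds because every curve is at least as
   long as the chord between its end points.

   The paths are built from the self-similarity K = U_i Psi_i K. The boundary of the square lies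
   in K, and the cells Psi_i([0,1]^2) can only meet along their boundaries, so connectedness of
   their union joins every offset c_i to the origin; concatenating the images of these paths under
   ever smaller compositions of the Psi_i joins every point of K to the origin by a path of bounded
   length. Zooming into the bottom row of cells then joins each x in K to its foot (fst x, 0) by a
   path of length O(snd x), and the symmetry of the pattern transfers this to the other three edges.
   Finally, zoom into x and y until they lie in different cells: disjoint cells are uniformly far
   apart, and meeting cells share a boundary point p with dist x p <= dist x y, to which both points
   are joined by the edge estimate at the scale of the cells. *)

section \<open>Lipschitz paths\<close>

definition lipschitz_path :: "'a::metric_space set \<Rightarrow> real \<Rightarrow> 'a \<Rightarrow> 'a \<Rightarrow> bool" where
  "lipschitz_path K L x y \<longleftrightarrow>
     (\<exists>g :: real \<Rightarrow> 'a. L-lipschitz_on {0..1} g \<and> g 0 = x \<and> g 1 = y \<and> g ` {0..1} \<subseteq> K)"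

lemma curve_length_le_lipschitz:
  assumes L: "L-lipschitz_on {0..1} g"
  shows "curve_length g \<le> ereal L"
  unfolding curve_length_def
proof (rule SUP_least, clarify)
  fix n and t :: "nat \<Rightarrow> real"
  assume t0: "t 0 = 0" and tn: "t n = 1" and mono: "\<forall>i<n. t i \<le> t (Suc i)"
  have t_mono: "t i \<le> t j" if "i \<le> j" "j \<le> n" for i j
    by (rule lift_Suc_mono_le_ivl[where N = "{..<n}"]) (use that mono in auto)
  have t_01: "t i \<in> {0..1}" if "i \<le> n" for i
    using t_mono[of 0 i] t_mono[of i n] that t0 tn by auto
  have "(\<Sum>i<n. dist (g (t i)) (g (t (Suc i)))) \<le> (\<Sum>i<n. L * (t (Suc i) - t i))"
  proof (rule sum_mono)
    fix i assume "i \<in> {..<n}"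
    then show "dist (g (t i)) (g (t (Suc i))) \<le> L * (t (Suc i) - t i)"
      using lipschitz_onD[OF L, of "t i" "t (Suc i)"] t_01[of i] t_01[of "Suc i"] mono
      by (auto simp: dist_real_def)
  qed
  also have "\<dots> = L * (t n - t 0)"
    by (simp add: sum_distrib_left[symmetric] sum_lessThan_telescope)
  finally show "ereal (\<Sum>i<fst (n, t). dist (g (snd (n, t) i)) (g (snd (n, t) (Suc i)))) \<le> ereal L"
    using t0 tn by simp
qed

lemma dist_le_geodesic_dist: "ereal (dist x y) \<le> geodesic_dist K x y"
  unfolding geodesic_dist_def
proof (rule INF_greatest)
  fix \<gamma> assume "\<gamma> \<in> {\<gamma>. rectifiable_curve \<gamma> \<and> path_image \<gamma> \<subseteq> K \<and> pathstart \<gamma> = x \<and> pathfinish \<gamma> = y}"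
  then have ends: "\<gamma> 0 = x" "\<gamma> 1 = y" by (auto simp: pathstart_def pathfinish_def)
  have "(1::nat, \<lambda>i::nat. if i = 0 then 0 else 1::real)
          \<in> {(n, t). t 0 = 0 \<and> t n = (1::real) \<and> (\<forall>i<n. t i \<le> t (Suc i))}"
    by simp
  then have "ereal (dist (\<gamma> 0) (\<gamma> 1)) \<le> curve_length \<gamma>"
    unfolding curve_length_def by (rule SUP_upper2) simp
  then show "ereal (dist x y) \<le> curve_length \<gamma>" using ends by simp
qed

lemma geodesic_dist_le_lipschitz_path:
  assumes "lipschitz_path K L x y"
  shows "geodesic_dist K x y \<le> ereal L"
proof -
  obtain g where g: "L-lipschitz_on {0..1::real} g" "g 0 = x" "g 1 = y" "g ` {0..1} \<subseteq> K"
    using assms unfolding lipschitz_path_def by blast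
  have length: "curve_length g \<le> ereal L" by (rule curve_length_le_lipschitz[OF g(1)])
  have "curve_length g < \<infinity>" using le_less_trans[OF length, of \<infinity>] by simp
  then have "rectifiable_curve g"
    unfolding rectifiable_curve_def path_def using lipschitz_on_continuous_on[OF g(1)] by simp
  then have "geodesic_dist K x y \<le> curve_length g"
    unfolding geodesic_dist_def using g
    by (intro INF_lower) (simp add: path_image_def pathstart_def pathfinish_def)
  with length show ?thesis by simp
qed

lemma lipschitz_path_nonneg: "lipschitz_path K L x y \<Longrightarrow> 0 \<le> L"
  unfolding lipschitz_path_def using lipschitz_on_nonneg by blast

lemma lipschitz_path_in: "lipschitz_path K L x y \<Longrightarrow> x \<in> K \<and> y \<in> K"
  unfolding lipschitz_path_def by force

lemma dist_le_lipschitz_path: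
  assumes "lipschitz_path K L x y"
  shows "dist x y \<le> L"
proof -
  obtain g where g: "L-lipschitz_on {0..1::real} g" "g 0 = x" "g 1 = y"
    using assms unfolding lipschitz_path_def by blast
  show ?thesis using lipschitz_onD[OF g(1), of 0 1] g by simp
qed

lemma lipschitz_path_refl: "x \<in> K \<Longrightarrow> lipschitz_path K 0 x x"
  unfolding lipschitz_path_def by (intro exI[of _ "\<lambda>_. x"]) (auto intro: lipschitz_on_constant)

lemma lipschitz_path_mono: "lipschitz_path K L x y \<Longrightarrow> L \<le> L' \<Longrightarrow> lipschitz_path K L' x y"
  unfolding lipschitz_path_def using lipschitz_on_le by blast

lemma lipschitz_path_sym:
  assumes "lipschitz_path K L x y"
  shows "lipschitz_path K L y x"
proof -
  obtain g where g: "L-lipschitz_on {0..1::real} g" "g 0 = x" "g 1 = y" "g ` {0..1} \<subseteq> K"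
    using assms unfolding lipschitz_path_def by blast
  have "L-lipschitz_on {0..1} (\<lambda>t. g (1 - t))"
  proof (rule lipschitz_onI)
    fix s t :: real assume "s \<in> {0..1}" "t \<in> {0..1}"
    then show "dist (g (1 - s)) (g (1 - t)) \<le> L * dist s t"
      using lipschitz_onD[OF g(1), of "1 - s" "1 - t"] by (simp add: dist_real_def abs_minus_commute)
  qed (rule lipschitz_on_nonneg[OF g(1)])
  then show ?thesis
    unfolding lipschitz_path_def using g by (intro exI[of _ "\<lambda>t. g (1 - t)"]) auto
qed

lemma lipschitz_path_on_interval:
  assumes path: "lipschitz_path K L x y" and "a \<le> b" "0 \<le> A" "L \<le> A * (b - a)"
  obtains M where "A-lipschitz_on {a..b} M" "M a = x" "M b = y" "M ` {a..b} \<subseteq> K"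
proof (cases "a = b")
  case True
  then have "L \<le> 0" using assms(4) by simp
  then have "x = y" using dist_le_lipschitz_path[OF path] by (metis dist_le_zero_iff order_trans)
  then show thesis
    using that[of "\<lambda>_. x"] path True \<open>0 \<le> A\<close> unfolding lipschitz_path_def by force
next
  case False
  then have "a < b" using \<open>a \<le> b\<close> by simp
  obtain g where g: "L-lipschitz_on {0..1::real} g" "g 0 = x" "g 1 = y" "g ` {0..1} \<subseteq> K"
    using path unfolding lipschitz_path_def by blast
  have "A-lipschitz_on {a..b} (\<lambda>t. g ((t - a) / (b - a)))"
  proof (rule lipschitz_onI)
    fix s t assume "s \<in> {a..b}" "t \<in> {a..b}"
    then have "dist (g ((s - a) / (b - a))) (g ((t - a) / (b - a)))
        \<le> L * dist ((s - a) / (b - a)) ((t - a) / (b - a))"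
      using \<open>a < b\<close> by (intro lipschitz_onD[OF g(1)]) (auto simp: field_simps)
    also have "\<dots> = L / (b - a) * dist s t"
      using \<open>a < b\<close> by (simp add: dist_real_def diff_divide_distrib[symmetric])
    also have "\<dots> \<le> A * dist s t"
      using assms(4) \<open>a < b\<close> by (intro mult_right_mono) (simp_all add: field_simps)
    finally show "dist (g ((s - a) / (b - a))) (g ((t - a) / (b - a))) \<le> A * dist s t" .
  qed (rule \<open>0 \<le> A\<close>)
  moreover have "(\<lambda>t. g ((t - a) / (b - a))) ` {a..b} \<subseteq> K"
    using g(4) \<open>a < b\<close> by (auto simp: field_simps image_subset_iff)
  ultimately show thesis using that g(2,3) \<open>a < b\<close> by simp
qed

lemma lipschitz_path_trans:
  assumes xy: "lipschitz_path K a x y" and yz: "lipschitz_path K b y z"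
  shows "lipschitz_path K (a + b) x z"
proof -
  have "0 \<le> a" "0 \<le> b" using lipschitz_path_nonneg xy yz by blast+
  define m where "m = a / (a + b)"
  have "0 \<le> m \<and> m \<le> 1 \<and> a \<le> (a + b) * (m - 0) \<and> b \<le> (a + b) * (1 - m)"
  proof (cases "a + b = 0")
    case False
    then have "0 < a + b" using \<open>0 \<le> a\<close> \<open>0 \<le> b\<close> by linarith
    then show ?thesis using \<open>0 \<le> a\<close> \<open>0 \<le> b\<close> by (simp add: m_def field_simps)
  qed (use \<open>0 \<le> a\<close> \<open>0 \<le> b\<close> in \<open>simp add: m_def\<close>)
  then have m: "0 \<le> m" "m \<le> 1" "a \<le> (a + b) * (m - 0)" "b \<le> (a + b) * (1 - m)" by simp_all
  obtain g where g: "(a + b)-lipschitz_on {0..m} g" "g 0 = x" "g m = y" "g ` {0..m} \<subseteq> K"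
    by (rule lipschitz_path_on_interval[OF xy m(1)]) (use \<open>0 \<le> a\<close> \<open>0 \<le> b\<close> m(3) in auto)
  obtain h where h: "(a + b)-lipschitz_on {m..1} h" "h m = y" "h 1 = z" "h ` {m..1} \<subseteq> K"
    by (rule lipschitz_path_on_interval[OF yz m(2)]) (use \<open>0 \<le> a\<close> \<open>0 \<le> b\<close> m(4) in auto)
  have "(a + b)-lipschitz_on {0..1} (\<lambda>t. if t \<le> m then g t else h t)"
    by (rule lipschitz_on_concat[OF g(1) h(1)]) (simp add: g(3) h(2))
  moreover have "(\<lambda>t. if t \<le> m then g t else h t) ` {0..1} \<subseteq> K"
    using g(4) h(4) by (auto simp: image_subset_iff)
  ultimately show ?thesis
    unfolding lipschitz_path_def using g(2,3) h(2,3) m(1,2) by (intro exI[of _ "\<lambda>t. if t \<le> m then g t else h t"]) auto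
qed

lemma lipschitz_path_linepath:
  fixes x y :: "'a::real_normed_vector"
  assumes "closed_segment x y \<subseteq> K"
  shows "lipschitz_path K (dist x y) x y"
proof -
  have "(dist x y)-lipschitz_on {0..1} (linepath x y)"
  proof (rule lipschitz_onI)
    fix s t :: real
    have "linepath x y s - linepath x y t = (t - s) *\<^sub>R (x - y)"
      by (simp add: linepath_def algebra_simps)
    then show "dist (linepath x y s) (linepath x y t) \<le> dist x y * dist s t"
      by (simp add: dist_norm dist_real_def abs_minus_commute)
  qed simp
  moreover have "linepath x y ` {0..1} \<subseteq> K"
    using assms by (metis path_image_def path_image_linepath)
  ultimately show ?thesis
    unfolding lipschitz_path_def by (intro exI[of _ "linepath x y"]) (auto simp: linepath_def)
qed

lemma lipschitz_path_image:
  assumes "lipschitz_path K L x y" and f: "r-lipschitz_on K f" and "f ` K \<subseteq> K'"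
  shows "lipschitz_path K' (r * L) (f x) (f y)"
proof -
  obtain g where g: "L-lipschitz_on {0..1::real} g" "g 0 = x" "g 1 = y" "g ` {0..1} \<subseteq> K"
    using assms(1) unfolding lipschitz_path_def by blast
  have "(r * L)-lipschitz_on {0..1} (\<lambda>t. f (g t))"
    by (rule lipschitz_on_compose2[OF g(1) lipschitz_on_subset[OF f g(4)]])
  then show ?thesis
    unfolding lipschitz_path_def using g assms(3) by (intro exI[of _ "\<lambda>t. f (g t)"]) auto
qed

lemma lipschitz_on_pointwise_limit:
  assumes f: "\<And>n. L-lipschitz_on S (f n)" and lim: "\<And>t. t \<in> S \<Longrightarrow> (\<lambda>n. f n t) \<longlonglongrightarrow> g t"
  shows "L-lipschitz_on S g"
proof (rule lipschitz_onI)
  fix s t assume st: "s \<in> S" "t \<in> S"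
  then have "(\<lambda>n. dist (f n s) (f n t)) \<longlonglongrightarrow> dist (g s) (g t)"
    by (intro tendsto_dist lim)
  moreover have "\<forall>n. dist (f n s) (f n t) \<le> L * dist s t"
    using lipschitz_onD[OF f] st by blast
  ultimately show "dist (g s) (g t) \<le> L * dist s t"
    by (intro LIMSEQ_le_const2) auto
qed (rule lipschitz_on_nonneg[OF f])

lemma lipschitz_on_extend:
  fixes F M :: "real \<Rightarrow> 'a::metric_space"
  assumes F: "A-lipschitz_on {0..1} F" "\<And>t. s \<le> t \<Longrightarrow> F t = u"
    and M: "A-lipschitz_on {s..s'} M" "M s = u" "M s' = v"
    and "0 \<le> s" "s \<le> s'" "s' \<le> 1"
  shows "A-lipschitz_on {0..1} (\<lambda>t. if t \<le> s' then (if t \<le> s then F t else M t) else v)"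
proof (rule lipschitz_on_concat)
  have "A-lipschitz_on {0..s} F" by (rule lipschitz_on_subset[OF F(1)]) (use assms in auto)
  then show "A-lipschitz_on {0..s'} (\<lambda>t. if t \<le> s then F t else M t)"
    by (rule lipschitz_on_concat[OF _ M(1)]) (simp add: F(2) M(2))
  show "A-lipschitz_on {s'..1} (\<lambda>t. v)"
    using lipschitz_on_nonneg[OF F(1)] by (intro lipschitz_on_mono[OF lipschitz_on_constant]) auto
  show "(if s' \<le> s then F s' else M s') = v"
    using F(2) M(2,3) \<open>s \<le> s'\<close> by auto
qed

lemma lipschitz_paths_on_intervals:
  assumes step: "\<And>n. lipschitz_path K (a n) (z n) (z (Suc n))" and "\<And>n. \<sigma> n \<le> \<sigma> (Suc n)"
    and "0 \<le> A" "\<And>n. a n \<le> A * (\<sigma> (Suc n) - \<sigma> n)"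
  obtains M where "\<And>n. A-lipschitz_on {\<sigma> n..\<sigma> (Suc n)} (M n)"
    "\<And>n. M n (\<sigma> n) = z n" "\<And>n. M n (\<sigma> (Suc n)) = z (Suc n)" "\<And>n. M n ` {\<sigma> n..\<sigma> (Suc n)} \<subseteq> K"
proof -
  have "\<forall>n. \<exists>M. A-lipschitz_on {\<sigma> n..\<sigma> (Suc n)} M \<and> M (\<sigma> n) = z n \<and> M (\<sigma> (Suc n)) = z (Suc n)
      \<and> M ` {\<sigma> n..\<sigma> (Suc n)} \<subseteq> K"
    using lipschitz_path_on_interval[OF step] assms(2-4) by metis
  then show thesis using that by metis
qed

lemma lipschitz_prefix_paths:
  fixes \<sigma> :: "nat \<Rightarrow> real" and M :: "nat \<Rightarrow> real \<Rightarrow> 'a::metric_space"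
  assumes \<sigma>: "\<sigma> 0 = 0" "\<And>n. \<sigma> n \<le> \<sigma> (Suc n)" "\<And>n. \<sigma> n \<le> 1"
    and M: "\<And>n. A-lipschitz_on {\<sigma> n..\<sigma> (Suc n)} (M n)"
      "\<And>n. M n (\<sigma> n) = z n" "\<And>n. M n (\<sigma> (Suc n)) = z (Suc n)"
      "\<And>n. M n ` {\<sigma> n..\<sigma> (Suc n)} \<subseteq> K"
    and "z 0 \<in> K" "0 \<le> A"
  obtains G where "\<And>n. A-lipschitz_on {0..1} (G n)" "\<And>n. G n ` {0..1} \<subseteq> K"
    "\<And>n t. \<sigma> n \<le> t \<Longrightarrow> G n t = z n" "\<And>m n t. n \<le> m \<Longrightarrow> t \<le> \<sigma> n \<Longrightarrow> G m t = G n t"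
proof -
  \<comment> \<open>\<open>G n\<close> follows the m-th path during \<open>[\<sigma> m, \<sigma> (Suc m)]\<close> for m < n and then rests at \<open>z n\<close>.\<close>
  obtain G where G_0: "G 0 = (\<lambda>t. z 0)"
    and G_Suc: "\<And>n. G (Suc n) =
      (\<lambda>t. if t \<le> \<sigma> (Suc n) then (if t \<le> \<sigma> n then G n t else M n t) else z (Suc n))"
    by (rule that[of "rec_nat (\<lambda>t. z 0)
      (\<lambda>n Gn t. if t \<le> \<sigma> (Suc n) then (if t \<le> \<sigma> n then Gn t else M n t) else z (Suc n))"]) simp_all
  have \<sigma>_nonneg: "0 \<le> \<sigma> n" for n
    using lift_Suc_mono_le[of \<sigma>, OF \<sigma>(2), of 0 n] \<sigma>(1) by simp
  have G_agree: "G m t = G n t" if "n \<le> m" "t \<le> \<sigma> n" for m n t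
    using that(1)
  proof (induction m rule: dec_induct)
    case (step m)
    have "t \<le> \<sigma> m" using lift_Suc_mono_le[of \<sigma>, OF \<sigma>(2) step(1)] that(2) by linarith
    then show ?case using step \<sigma>(2)[of m] by (simp add: G_Suc)
  qed simp
  have G: "A-lipschitz_on {0..1} (G n) \<and> G n ` {0..1} \<subseteq> K \<and> (\<forall>t\<ge>\<sigma> n. G n t = z n)" for n
  proof (induction n)
    case 0
    then show ?case using G_0 \<open>z 0 \<in> K\<close> \<open>0 \<le> A\<close>
      by (auto intro: lipschitz_on_mono[OF lipschitz_on_constant])
  next
    case (Suc n)
    then have lip: "A-lipschitz_on {0..1} (G n)" and in_K: "G n ` {0..1} \<subseteq> K"
      and tail: "\<And>t. \<sigma> n \<le> t \<Longrightarrow> G n t = z n" by auto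
    have "A-lipschitz_on {0..1} (G (Suc n))"
      unfolding G_Suc by (rule lipschitz_on_extend[OF lip tail M(1,2,3) \<sigma>_nonneg \<sigma>(2,3)])
    moreover have "z (Suc n) \<in> K" using M(3,4)[of n] \<sigma>(2)[of n] by force
    then have "G (Suc n) ` {0..1} \<subseteq> K" using in_K M(4)[of n] by (auto simp: G_Suc)
    moreover have "\<forall>t\<ge>\<sigma> (Suc n). G (Suc n) t = z (Suc n)"
      using tail M(3)[of n] \<sigma>(2)[of n] M(2)[of n] by (auto simp: G_Suc)
    ultimately show ?case by blast
  qed
  show thesis
    by (rule that[of G]) (use G G_agree in auto)
qed

lemma lipschitz_path_of_prefix_paths:
  fixes G :: "nat \<Rightarrow> real \<Rightarrow> 'a::metric_space"
  assumes K: "closed K" and \<sigma>: "\<sigma> 0 = 0" "\<And>n. \<sigma> n \<le> 1" "\<sigma> \<longlonglongrightarrow> 1" and w: "z \<longlonglongrightarrow> w"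
    and G: "\<And>n. A-lipschitz_on {0..1} (G n)" "\<And>n. G n ` {0..1} \<subseteq> K"
      "\<And>n t. \<sigma> n \<le> t \<Longrightarrow> G n t = z n" "\<And>m n t. n \<le> m \<Longrightarrow> t \<le> \<sigma> n \<Longrightarrow> G m t = G n t"
  shows "lipschitz_path K A (z 0) w"
proof -
  have G_conv: "convergent (\<lambda>n. G n t)" if "t \<in> {0..1}" for t
  proof (cases "t < 1")
    case True
    then obtain n where "t < \<sigma> n"
      using order_tendstoD(1)[OF \<sigma>(3)] by (auto simp: eventually_sequentially)
    then have "eventually (\<lambda>m. G m t = G n t) sequentially"
      unfolding eventually_sequentially using G(4) less_imp_le by blast
    then have "(\<lambda>m. G m t) \<longlonglongrightarrow> G n t" by (rule tendsto_eventually)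
    then show ?thesis by (rule convergentI)
  next
    case False
    then have "t = 1" using that by simp
    then have "(\<lambda>n. G n t) = z" using G(3) \<sigma>(2) by auto
    then show ?thesis using w by (auto intro: convergentI)
  qed
  define H where "H t = lim (\<lambda>n. G n t)" for t
  have G_lim: "(\<lambda>n. G n t) \<longlonglongrightarrow> H t" if "t \<in> {0..1}" for t
    using G_conv[OF that] by (simp add: H_def convergent_LIMSEQ_iff)
  have "A-lipschitz_on {0..1} H" by (rule lipschitz_on_pointwise_limit[OF G(1) G_lim])
  moreover have "H ` {0..1} \<subseteq> K"
  proof (rule image_subsetI)
    fix t :: real assume "t \<in> {0..1}"
    then show "H t \<in> K" using closed_sequentially[OF K _ G_lim] G(2) by blast
  qed
  moreover have "G n 0 = z 0" for n using G(4)[of 0 n 0] G(3)[of 0 0] \<sigma>(1) by simp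
  then have "H 0 = z 0" using G_lim[of 0] by (simp add: LIMSEQ_const_iff)
  moreover have "H 1 = w" using G_lim[of 1] G(3)[OF \<sigma>(2)] LIMSEQ_unique[OF w] by simp
  ultimately show ?thesis unfolding lipschitz_path_def by (intro exI[of _ H]) simp
qed

lemma lipschitz_path_limit:
  assumes K: "closed K" and step: "\<And>n. lipschitz_path K (a n) (z n) (z (Suc n))"
    and a: "summable a" and w: "z \<longlonglongrightarrow> w"
  shows "lipschitz_path K (suminf a) (z 0) w"
proof -
  have a_nonneg: "0 \<le> a n" for n using lipschitz_path_nonneg[OF step] .
  have z_in: "z n \<in> K" for n using lipschitz_path_in[OF step[of n]] by blast
  define A where "A = suminf a"
  show ?thesis
  proof (cases "A = 0")
    case True
    then have "a n = 0" for n using suminf_eq_zero_iff[OF a a_nonneg] unfolding A_def by blast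
    then have z_const: "z n = z 0" for n
      by (induction n) (use dist_le_lipschitz_path[OF step] in force)+
    have "(\<lambda>_. z 0) \<longlonglongrightarrow> w"
      by (rule Lim_transform_eventually[OF w always_eventually]) (use z_const in blast)
    then have "w = z 0" by (simp add: LIMSEQ_const_iff)
    then show ?thesis using lipschitz_path_refl[OF z_in[of 0]] True unfolding A_def by simp
  next
    case False
    then have "0 < A" using suminf_nonneg[OF a a_nonneg] unfolding A_def by simp
    define \<sigma> where "\<sigma> n = (\<Sum>m<n. a m) / A" for n
    have \<sigma>_Suc: "\<sigma> (Suc n) = \<sigma> n + a n / A" for n by (simp add: \<sigma>_def add_divide_distrib)
    have \<sigma>_mono: "\<sigma> n \<le> \<sigma> (Suc n)" for n using \<sigma>_Suc a_nonneg \<open>0 < A\<close> by simp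
    have \<sigma>_le_1: "\<sigma> n \<le> 1" for n
      using sum_le_suminf[OF a _ a_nonneg, of "{..<n}"] \<open>0 < A\<close> by (simp add: \<sigma>_def A_def)
    have \<sigma>_lim: "\<sigma> \<longlonglongrightarrow> 1"
      using tendsto_divide[OF summable_LIMSEQ[OF a] tendsto_const[of A]] \<open>0 < A\<close>
      by (simp add: \<sigma>_def[abs_def] A_def)
    have budget: "a n \<le> A * (\<sigma> (Suc n) - \<sigma> n)" for n using \<sigma>_Suc[of n] \<open>0 < A\<close> by simp
    obtain M where M: "\<And>n. A-lipschitz_on {\<sigma> n..\<sigma> (Suc n)} (M n)"
      "\<And>n. M n (\<sigma> n) = z n" "\<And>n. M n (\<sigma> (Suc n)) = z (Suc n)" "\<And>n. M n ` {\<sigma> n..\<sigma> (Suc n)} \<subseteq> K"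
      by (rule lipschitz_paths_on_intervals[where \<sigma> = \<sigma>, OF step \<sigma>_mono less_imp_le[OF \<open>0 < A\<close>] budget])
        auto
    have "\<sigma> 0 = 0" by (simp add: \<sigma>_def)
    obtain G where "\<And>n. A-lipschitz_on {0..1} (G n)" "\<And>n. G n ` {0..1} \<subseteq> K"
      "\<And>n t. \<sigma> n \<le> t \<Longrightarrow> G n t = z n" "\<And>m n t. n \<le> m \<Longrightarrow> t \<le> \<sigma> n \<Longrightarrow> G m t = G n t"
      by (rule lipschitz_prefix_paths[OF \<open>\<sigma> 0 = 0\<close> \<sigma>_mono \<sigma>_le_1 M z_in less_imp_le[OF \<open>0 < A\<close>]]) auto
    from lipschitz_path_of_prefix_paths[OF K \<open>\<sigma> 0 = 0\<close> \<sigma>_le_1 \<sigma>_lim w this]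
    show ?thesis unfolding A_def .
  qed
qed

section \<open>Contractions, self-similar sets and finite covers\<close>

text \<open>Induction over scales; it is well founded because \<open>h\<close> is bounded by \<open>B\<close> and grows by the
  factor \<open>1 / r\<close> in each step.\<close>

lemma scale_induct:
  fixes h :: "'a \<Rightarrow> real"
  assumes r: "0 < r" "r < 1" and bound: "\<And>x. P x \<Longrightarrow> h x \<le> B"
    and zero: "\<And>x. P x \<Longrightarrow> h x \<le> 0 \<Longrightarrow> Q x"
    and step: "\<And>x. P x \<Longrightarrow> 0 < h x \<Longrightarrow> (\<And>y. P y \<Longrightarrow> h x \<le> r * h y \<Longrightarrow> Q y) \<Longrightarrow> Q x"
    and "P x"
  shows "Q x"
proof -
  have scale: "Q x" if "P x" "B * r ^ n \<le> h x" for n x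
    using that
  proof (induction n arbitrary: x)
    case 0
    have "False" if "0 < h x" "P y" "h x \<le> r * h y" for y
    proof -
      have "r * h y \<le> r * B" using bound[OF that(2)] r(1) by simp
      moreover have "r * B < B" using that(1) bound[OF 0(1)] r(2) by simp
      ultimately show False using that(3) 0(2) by simp
    qed
    then show ?case using step[OF 0(1)] zero[OF 0(1)] by force
  next
    case (Suc n)
    have "Q y" if "P y" "h x \<le> r * h y" for y
    proof -
      have "r * (B * r ^ n) \<le> r * h y" using Suc(3) that(2) by (simp add: algebra_simps)
      then show ?thesis using Suc.IH[OF that(1)] r(1) by simp
    qed
    then show ?case using step[OF Suc(2)] zero[OF Suc(2)] by force
  qed
  show ?thesis
  proof (cases "h x \<le> 0")
    case False
    have "\<exists>n. B * r ^ n \<le> h x"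
    proof (cases "B \<le> 0")
      case True
      then show ?thesis using False by (intro exI[of _ 0]) simp
    next
      case False
      obtain n where "r ^ n < h x / B"
        using real_arch_pow_inv[of "h x / B" r] \<open>\<not> h x \<le> 0\<close> False r by auto
      then show ?thesis using False by (intro exI[of _ n]) (simp add: field_simps)
    qed
    then show ?thesis using scale \<open>P x\<close> by blast
  qed (use zero \<open>P x\<close> in blast)
qed

lemma contraction_cover_subset:
  fixes f :: "'i \<Rightarrow> 'a::metric_space \<Rightarrow> 'a"
  assumes A: "closed A" "A \<noteq> {}" and "bounded X" and "r < 1"
    and lip: "\<And>i. i \<in> I \<Longrightarrow> r-lipschitz_on UNIV (f i)"
    and maps: "\<And>i. i \<in> I \<Longrightarrow> f i ` A \<subseteq> A" and cover: "X \<subseteq> (\<Union>i\<in>I. f i ` X)"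
  shows "X \<subseteq> A"
proof
  fix x assume "x \<in> X"
  then obtain i where "i \<in> I" using cover by blast
  then have "0 \<le> r" using lipschitz_on_nonneg[OF lip] by blast
  obtain a where "a \<in> A" using A(2) by blast
  obtain B where B: "\<forall>y\<in>X. dist a y \<le> B" using \<open>bounded X\<close> bounded_any_center by blast
  have approx: "\<forall>y\<in>X. \<exists>q\<in>A. dist y q \<le> B * r ^ n" for n
  proof (induction n)
    case 0
    then show ?case using B \<open>a \<in> A\<close> by (auto simp: dist_commute)
  next
    case (Suc n)
    show ?case
    proof
      fix y assume "y \<in> X"
      then obtain i y' where i: "i \<in> I" "y' \<in> X" "y = f i y'" using cover by blast
      then obtain q where q: "q \<in> A" "dist y' q \<le> B * r ^ n" using Suc by blast
      have "dist y (f i q) \<le> r * dist y' q" using lipschitz_onD[OF lip[OF i(1)]] i(3) by simp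
      also have "\<dots> \<le> r * (B * r ^ n)" using q(2) \<open>0 \<le> r\<close> by (rule mult_left_mono)
      finally show "\<exists>q\<in>A. dist y q \<le> B * r ^ Suc n"
        using maps[OF i(1)] q(1) by (intro bexI[of _ "f i q"]) (auto simp: algebra_simps)
    qed
  qed
  have "\<exists>q\<in>A. dist q x < e" if "0 < e" for e
  proof -
    have "0 \<le> B" using B \<open>x \<in> X\<close> zero_le_dist order_trans by blast
    obtain n where n: "r ^ n < e / (B + 1)"
      using real_arch_pow_inv[of "e / (B + 1)" r] \<open>r < 1\<close> \<open>0 < e\<close> \<open>0 \<le> B\<close> by auto
    obtain q where q: "q \<in> A" "dist x q \<le> B * r ^ n" using approx \<open>x \<in> X\<close> by blast
    have "dist x q \<le> (B + 1) * r ^ n" using q(2) \<open>0 \<le> r\<close> by (simp add: distrib_right add_increasing2)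
    also have "\<dots> < e" using n \<open>0 \<le> B\<close> by (simp add: field_simps)
    finally show ?thesis using q(1) by (intro bexI[of _ q]) (simp_all add: dist_commute)
  qed
  then show "x \<in> A" using closed_approachable[OF A(1)] by blast
qed

lemma self_similar_zoom:
  fixes f :: "'i \<Rightarrow> 'a::metric_space \<Rightarrow> 'a"
  assumes cover: "K \<subseteq> (\<Union>i\<in>I. f i ` K)" and maps: "\<And>i. i \<in> I \<Longrightarrow> f i ` K \<subseteq> K"
    and lip: "\<And>i. i \<in> I \<Longrightarrow> r-lipschitz_on UNIV (f i)" and "x \<in> K"
  obtains \<Phi> xs w where "\<Phi> 0 = id" "\<And>n. \<Phi> (Suc n) = \<Phi> n \<circ> f (w n)" "\<And>n. w n \<in> I"
    "\<And>n. (r ^ n)-lipschitz_on UNIV (\<Phi> n)" "\<And>n. \<Phi> n ` K \<subseteq> K" "\<And>n. xs n \<in> K" "\<And>n. \<Phi> n (xs n) = x"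
proof -
  have "\<forall>y\<in>K. \<exists>q. fst q \<in> I \<and> snd q \<in> K \<and> y = f (fst q) (snd q)"
    using cover by fastforce
  then obtain q where q: "\<And>y. y \<in> K \<Longrightarrow> fst (q y) \<in> I \<and> snd (q y) \<in> K \<and> y = f (fst (q y)) (snd (q y))"
    by (metis bchoice)
  define xs where "xs n = ((snd \<circ> q) ^^ n) x" for n
  define w where "w n = fst (q (xs n))" for n
  have xs_K: "xs n \<in> K" for n by (induction n) (use \<open>x \<in> K\<close> q in \<open>auto simp: xs_def\<close>)
  have w: "w n \<in> I" "xs n = f (w n) (xs (Suc n))" for n
    using q[OF xs_K[of n]] by (simp_all add: w_def xs_def)
  obtain \<Phi> where \<Phi>_0: "\<Phi> 0 = id" and \<Phi>_Suc: "\<And>n. \<Phi> (Suc n) = \<Phi> n \<circ> f (w n)"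
    by (rule that[of "rec_nat id (\<lambda>n F. F \<circ> f (w n))"]) simp_all
  have "(r ^ n)-lipschitz_on UNIV (\<Phi> n)" for n
  proof (induction n)
    case (Suc n)
    have "(r ^ n * r)-lipschitz_on UNIV (\<Phi> n \<circ> f (w n))"
      using lipschitz_on_compose[OF lip[OF w(1)] lipschitz_on_subset[OF Suc]] by simp
    then show ?case by (simp add: \<Phi>_Suc mult.commute)
  qed (simp add: \<Phi>_0 lipschitz_on_id)
  moreover have "\<Phi> n ` K \<subseteq> K" for n
  proof (induction n)
    case (Suc n)
    then show ?case using maps[OF w(1)[of n]] by (auto simp: \<Phi>_Suc)
  qed (simp add: \<Phi>_0)
  moreover have "\<Phi> n (xs n) = x" for n
  proof (induction n)
    case (Suc n)
    then show ?case by (simp add: \<Phi>_Suc w(2)[of n, symmetric])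
  qed (simp add: \<Phi>_0 xs_def)
  ultimately show thesis using that \<Phi>_0 \<Phi>_Suc w(1) xs_K by blast
qed

lemma lipschitz_path_attractor:
  fixes f :: "'i \<Rightarrow> 'a::metric_space \<Rightarrow> 'a"
  assumes K: "closed K" "bounded K" "K = (\<Union>i\<in>I. f i ` K)" and "r < 1"
    and lip: "\<And>i. i \<in> I \<Longrightarrow> r-lipschitz_on UNIV (f i)"
    and p: "p \<in> K" and E: "\<And>i. i \<in> I \<Longrightarrow> lipschitz_path K E p (f i p)"
    and x: "x \<in> K"
  shows "lipschitz_path K (E / (1 - r)) p x"
proof -
  have maps: "f i ` K \<subseteq> K" if "i \<in> I" for i using K(3) that by blast
  obtain \<Phi> xs w where \<Phi>: "\<Phi> 0 = id" "\<And>n. \<Phi> (Suc n) = \<Phi> n \<circ> f (w n)" "\<And>n. w n \<in> I"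
    "\<And>n. (r ^ n)-lipschitz_on UNIV (\<Phi> n)" "\<And>n. \<Phi> n ` K \<subseteq> K" "\<And>n. xs n \<in> K" "\<And>n. \<Phi> n (xs n) = x"
    by (rule self_similar_zoom[OF equalityD1[OF K(3)] maps lip x]) auto
  have "0 \<le> r" using lipschitz_on_nonneg[OF lip[OF \<Phi>(3)]] .
  define z where "z n = \<Phi> n p" for n
  have step: "lipschitz_path K (r ^ n * E) (z n) (z (Suc n))" for n
    using lipschitz_path_image[OF E[OF \<Phi>(3)] lipschitz_on_subset[OF \<Phi>(4)] \<Phi>(5)]
    by (simp add: z_def \<Phi>(2))
  obtain D where D: "\<forall>y\<in>K. dist p y \<le> D" using K(2) bounded_any_center by blast
  have lim: "(\<lambda>n. r ^ n * D) \<longlonglongrightarrow> 0"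
    using tendsto_mult_right[OF LIMSEQ_power_zero, of r D] \<open>0 \<le> r\<close> \<open>r < 1\<close> by simp
  have "dist (z n) x \<le> r ^ n * D" for n
  proof -
    have "dist (z n) x \<le> r ^ n * dist p (xs n)"
      using lipschitz_onD[OF \<Phi>(4)[of n], of p "xs n"] \<Phi>(7)[of n] by (simp add: z_def)
    also have "\<dots> \<le> r ^ n * D" using D \<Phi>(6) \<open>0 \<le> r\<close> by (simp add: mult_left_mono)
    finally show ?thesis .
  qed
  then have "(\<lambda>n. dist (z n) x) \<longlonglongrightarrow> 0"
    by (intro Lim_null_comparison[OF always_eventually lim]) simp
  then have "z \<longlonglongrightarrow> x" by (rule tendsto_dist_iff[THEN iffD2])
  moreover have sums: "(\<lambda>n. r ^ n * E) sums (E / (1 - r))"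
    using sums_mult2[OF geometric_sums, of r E] \<open>0 \<le> r\<close> \<open>r < 1\<close> by simp
  ultimately have "lipschitz_path K (\<Sum>n. r ^ n * E) (z 0) x"
    by (intro lipschitz_path_limit[OF K(1) step sums_summable[OF sums]])
  then show ?thesis by (simp add: sums_unique[OF sums, symmetric] z_def \<Phi>(1))
qed

lemma finite_uniform_positive:
  fixes P :: "'i \<Rightarrow> real \<Rightarrow> bool"
  assumes "finite I" and pos: "\<And>i. i \<in> I \<Longrightarrow> \<exists>d>0. P i d"
    and mono: "\<And>i d d'. P i d \<Longrightarrow> 0 < d' \<Longrightarrow> d' \<le> d \<Longrightarrow> P i d'"
  shows "\<exists>d>0. \<forall>i\<in>I. P i d"
  using assms(1) pos
proof (induction I rule: finite_induct)
  case (insert i I)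
  obtain d where d: "0 < d" "\<forall>j\<in>I. P j d" using insert by blast
  obtain d' where d': "0 < d'" "P i d'" using insert.prems by blast
  have "\<forall>j\<in>insert i I. P j (min d d')"
    using d d' by (auto intro: mono)
  then show ?case using d(1) d'(1) by (intro exI[of _ "min d d'"]) simp
qed (intro exI[of _ 1], simp)

lemma connected_closed_cover_propagate:
  assumes "finite I" and closed: "\<And>i. i \<in> I \<Longrightarrow> closed (A i)" and nonempty: "\<And>i. i \<in> I \<Longrightarrow> A i \<noteq> {}"
    and "connected (\<Union>i\<in>I. A i)" and "s \<in> I" "P s"
    and step: "\<And>i j. i \<in> I \<Longrightarrow> j \<in> I \<Longrightarrow> P i \<Longrightarrow> A i \<inter> A j \<noteq> {} \<Longrightarrow> P j"
    and "j \<in> I"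
  shows "P j"
proof (rule ccontr)
  assume "\<not> P j"
  define U where "U = (\<Union>i\<in>{i\<in>I. P i}. A i)"
  define V where "V = (\<Union>i\<in>{i\<in>I. \<not> P i}. A i)"
  have "closed U" "closed V" unfolding U_def V_def using \<open>finite I\<close> closed by (auto intro: closed_UN)
  moreover have "(\<Union>i\<in>I. A i) \<subseteq> U \<union> V" unfolding U_def V_def by blast
  moreover have "U \<inter> V = {}" unfolding U_def V_def using step by blast
  moreover have "U \<inter> (\<Union>i\<in>I. A i) \<noteq> {}" using nonempty \<open>s \<in> I\<close> \<open>P s\<close> by (auto simp: U_def)
  moreover have "V \<inter> (\<Union>i\<in>I. A i) \<noteq> {}" using nonempty \<open>j \<in> I\<close> \<open>\<not> P j\<close> by (auto simp: V_def)
  ultimately show False using \<open>connected (\<Union>i\<in>I. A i)\<close> unfolding connected_closed by blast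
qed

section \<open>Geometry of the unit square\<close>

lemma box_not_subset_segment:
  fixes S :: "pt set"
  assumes "0 < w" "0 < h" and S: "is_segment S \<or> (\<exists>p. S = {p}) \<or> S = {}"
  shows "\<not> {x0..x0 + w} \<times> {y0..y0 + h} \<subseteq> S"
proof
  assume box: "{x0..x0 + w} \<times> {y0..y0 + h} \<subseteq> S"
  then have P: "(x0, y0) \<in> S" "(x0 + w, y0) \<in> S" "(x0, y0 + h) \<in> S" using assms(1,2) by auto
  consider "is_segment S" | "\<exists>p. S = {p}" | "S = {}" using S by blast
  then show False
  proof cases
    case 1
    then have "collinear S" by (auto simp: is_segment_def)
    then have "collinear {(x0, y0), (x0 + w, y0), (x0, y0 + h)}"
      by (rule collinear_subset) (use P in auto)
    then obtain u :: pt where u: "\<forall>p\<in>{(x0, y0), (x0 + w, y0), (x0, y0 + h)}.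
        \<forall>q\<in>{(x0, y0), (x0 + w, y0), (x0, y0 + h)}. \<exists>c. p - q = c *\<^sub>R u"
      unfolding collinear_def by blast
    obtain c1 where "(x0 + w, y0) - (x0, y0) = c1 *\<^sub>R u" using u by blast
    then have "w = c1 * fst u" "0 = c1 * snd u" by (auto simp: prod_eq_iff)
    moreover obtain c2 where "(x0, y0 + h) - (x0, y0) = c2 *\<^sub>R u" using u by blast
    then have "0 = c2 * fst u" "h = c2 * snd u" by (auto simp: prod_eq_iff)
    ultimately show False using assms(1,2) by (metis mult_eq_0_iff less_irrefl)
  next
    case 2
    then show False using P(1,2) assms(1) by auto
  next
    case 3
    then show False using P(1) by simp
  qed
qed

lemma square_isometry_affine:
  assumes "g \<in> square_isometries"
  shows "g (s *\<^sub>R x + y) = s *\<^sub>R (g x - g 0) + g y"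
  using assms by (cases x, cases y) (auto simp: square_isometries_def zero_prod_def algebra_simps)

lemma square_isometry_dist:
  assumes "g \<in> square_isometries"
  shows "dist (g x) (g y) = dist x y"
  using assms by (cases x, cases y)
    (auto simp: square_isometries_def dist_prod_def dist_real_def power2_commute add.commute)

lemma square_isometry_order_4:
  assumes "g \<in> square_isometries"
  shows "g (g (g (g x))) = x"
  using assms by (cases x) (auto simp: square_isometries_def)

lemma square_isometry_unit_square:
  assumes "g \<in> square_isometries"
  shows "g ` unit_square = unit_square"
proof
  show sub: "g ` unit_square \<subseteq> unit_square"
    using assms by (auto simp: square_isometries_def unit_square_def)
  show "unit_square \<subseteq> g ` unit_square"
  proof
    fix x assume "x \<in> unit_square"
    then have "g (g (g x)) \<in> unit_square" using sub by blast
    then show "x \<in> g ` unit_square" using square_isometry_order_4[OF assms, of x] by force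
  qed
qed

lemma square_isometry_closed_segment:
  assumes "g \<in> square_isometries"
  shows "g ` closed_segment a b = closed_segment (g a) (g b)"
proof -
  have "g ((1 - u) *\<^sub>R a + u *\<^sub>R b) = (1 - u) *\<^sub>R g a + u *\<^sub>R g b" for u
    using square_isometry_affine[OF assms, of "1 - u" a "u *\<^sub>R b"]
      square_isometry_affine[OF assms, of u b 0]
    by (simp add: algebra_simps)
  then show ?thesis
    by (simp add: closed_segment_image_interval image_image)
qed

lemma square_isometry_inj: "g \<in> square_isometries \<Longrightarrow> inj g"
  by (rule injI) (metis dist_eq_0_iff square_isometry_dist)

lemma square_isometry_segment_or_point:
  assumes g: "g \<in> square_isometries" and S: "is_segment S \<or> (\<exists>p. S = {p}) \<or> S = {}"
  shows "is_segment (g ` S) \<or> (\<exists>p. g ` S = {p}) \<or> g ` S = {}"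
proof -
  have "is_segment (g ` S)" if seg: "is_segment S"
  proof -
    obtain a b where "a \<noteq> b" "S = closed_segment a b" using seg unfolding is_segment_def by blast
    moreover have "g a \<noteq> g b" using \<open>a \<noteq> b\<close> square_isometry_inj[OF g] by (simp add: inj_eq)
    ultimately have "g a \<noteq> g b \<and> g ` S = closed_segment (g a) (g b)"
      using square_isometry_closed_segment[OF g] by simp
    then show ?thesis unfolding is_segment_def by blast
  qed
  moreover have "\<exists>q. g ` S = {q}" if "S = {p}" for p using that by simp
  ultimately show ?thesis using S by auto
qed

lemma usc_map_square_isometry:
  assumes "g \<in> square_isometries"
  shows "usc_map k (\<lambda>i. g (c i) - (1 / k) *\<^sub>R g 0) i (g x) = g (usc_map k c i x)"
  using square_isometry_affine[OF assms, of "1 / k" x "c i"] by (simp add: usc_map_def algebra_simps)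

definition square_boundary :: "pt set" where
  "square_boundary = {z \<in> unit_square. fst z = 0 \<or> fst z = 1 \<or> snd z = 0 \<or> snd z = 1}"

lemma zero_in_square_boundary: "0 \<in> square_boundary"
  by (simp add: square_boundary_def unit_square_def zero_prod_def)

lemma closed_segment_square_boundary:
  assumes "a \<in> square_boundary" "b \<in> square_boundary"
    and edge: "fst a = fst b \<and> fst a \<in> {0, 1} \<or> snd a = snd b \<and> snd a \<in> {0, 1}"
  shows "closed_segment a b \<subseteq> square_boundary"
proof
  fix z assume "z \<in> closed_segment a b"
  then obtain u where u: "0 \<le> u" "u \<le> 1" "z = (1 - u) *\<^sub>R a + u *\<^sub>R b"
    unfolding in_segment by blast
  have "convex unit_square" unfolding unit_square_def by (intro convex_Times convex_real_interval)
  then have "z \<in> unit_square"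
    using assms(1,2) u by (auto simp: square_boundary_def intro: convexD_alt)
  moreover have "fst z = (1 - u) * fst a + u * fst b" "snd z = (1 - u) * snd a + u * snd b"
    using u(3) by simp_all
  then have "fst z = fst a \<and> fst a \<in> {0, 1} \<or> snd z = snd a \<and> snd a \<in> {0, 1}"
    using edge by (auto simp: algebra_simps)
  ultimately show "z \<in> square_boundary" by (auto simp: square_boundary_def)
qed

lemma square_isometry_square_boundary:
  assumes "g \<in> square_isometries"
  shows "g ` square_boundary \<subseteq> square_boundary"
  using assms by (auto simp: square_isometries_def square_boundary_def unit_square_def)

lemma dist_on_square_edge:
  assumes "a \<in> unit_square" "b \<in> unit_square" "fst a = fst b \<or> snd a = snd b"
  shows "dist a b \<le> 1"
proof -
  have "dist a b = dist (snd a) (snd b) \<or> dist a b = dist (fst a) (fst b)"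
    using assms(3) by (auto simp: dist_prod_def)
  then show ?thesis using assms(1,2) by (auto simp: unit_square_def dist_real_def)
qed

lemma interval_closest_common_point:
  fixes a b l u l' u' :: real
  assumes "a \<in> {l..u}" "b \<in> {l'..u'}" "{l..u} \<inter> {l'..u'} \<noteq> {}"
  shows "\<exists>p\<in>{l..u} \<inter> {l'..u'}. \<bar>a - p\<bar> \<le> \<bar>a - b\<bar>"
proof
  show "max (max l l') (min a (min u u')) \<in> {l..u} \<inter> {l'..u'}"
    "\<bar>a - max (max l l') (min a (min u u'))\<bar> \<le> \<bar>a - b\<bar>"
    using assms by (auto simp: max_def min_def abs_if)
qed

lemma box_closest_common_point:
  fixes x y :: pt
  assumes "x \<in> {l1..u1} \<times> {l2..u2}" "y \<in> {l1'..u1'} \<times> {l2'..u2'}"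
    and "({l1..u1} \<times> {l2..u2}) \<inter> ({l1'..u1'} \<times> {l2'..u2'}) \<noteq> {}"
  shows "\<exists>p\<in>({l1..u1} \<times> {l2..u2}) \<inter> ({l1'..u1'} \<times> {l2'..u2'}). dist x p \<le> dist x y"
proof -
  have "fst x \<in> {l1..u1}" "fst y \<in> {l1'..u1'}" "{l1..u1} \<inter> {l1'..u1'} \<noteq> {}"
    "snd x \<in> {l2..u2}" "snd y \<in> {l2'..u2'}" "{l2..u2} \<inter> {l2'..u2'} \<noteq> {}"
    using assms by auto
  then obtain p1 p2 where p1: "p1 \<in> {l1..u1} \<inter> {l1'..u1'}" "\<bar>fst x - p1\<bar> \<le> \<bar>fst x - fst y\<bar>"
    and p2: "p2 \<in> {l2..u2} \<inter> {l2'..u2'}" "\<bar>snd x - p2\<bar> \<le> \<bar>snd x - snd y\<bar>"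
    using interval_closest_common_point by meson
  have "(fst x - p1)\<^sup>2 \<le> (fst x - fst y)\<^sup>2" "(snd x - p2)\<^sup>2 \<le> (snd x - snd y)\<^sup>2"
    using p1(2) p2(2) abs_le_square_iff by blast+
  then have "dist x (p1, p2) \<le> dist x y" by (simp add: dist_prod_def dist_real_def)
  then show ?thesis using p1(1) p2(1) by auto
qed

section \<open>Unconstrained Sierpinski carpets\<close>

locale usc =
  fixes k N :: nat and c :: "nat \<Rightarrow> pt" and K :: "pt set"
  assumes usc: "USC k N c K"
begin

abbreviation \<Psi> :: "nat \<Rightarrow> pt \<Rightarrow> pt" where "\<Psi> \<equiv> usc_map k c"

abbreviation cell :: "nat \<Rightarrow> pt set" where "cell i \<equiv> \<Psi> i ` unit_square"

lemma k_ge_3: "3 \<le> k"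
  using usc unfolding USC_def by (elim conjE)

lemma cells_meet:
  assumes "i < N" "j < N" "i \<noteq> j"
  shows "is_segment (cell i \<inter> cell j) \<or> (\<exists>p. cell i \<inter> cell j = {p}) \<or> cell i \<inter> cell j = {}"
proof -
  have "\<forall>i<N. \<forall>j<N. i \<noteq> j \<longrightarrow> (let S = cell i \<inter> cell j in is_segment S \<or> (\<exists>p. S = {p}) \<or> S = {})"
    using usc unfolding USC_def by (elim conjE)
  then show ?thesis using assms by (simp add: Let_def)
qed

lemma cells_connected: "connected (\<Union>i<N. cell i)"
  using usc unfolding USC_def by (elim conjE)

lemma cells_symmetric:
  assumes "g \<in> square_isometries"
  shows "g ` (\<Union>i<N. cell i) = (\<Union>i<N. cell i)"
proof -
  have "\<forall>g\<in>square_isometries. g ` (\<Union>i<N. cell i) = (\<Union>i<N. cell i)"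
    using usc unfolding USC_def by (elim conjE)
  then show ?thesis using assms by (rule bspec)
qed

lemma bottom_edge_in_cells: "{0..1} \<times> {0} \<subseteq> (\<Union>i<N. cell i)"
  using usc unfolding USC_def by (elim conjE)

lemma cells_in_square: "(\<Union>i<N. cell i) \<subseteq> unit_square"
  using usc unfolding USC_def by (elim conjE)

lemma K_compact: "compact K"
  using usc unfolding USC_def by (elim conjE)

lemma K_nonempty: "K \<noteq> {}"
  using usc unfolding USC_def by (elim conjE)

lemma K_self_similar: "K = (\<Union>i<N. \<Psi> i ` K)"
  using usc unfolding USC_def by (elim conjE)

lemma k_pos: "0 < real k"
  using k_ge_3 by simp

lemma Psi_eq: "\<Psi> i x = (fst x / k + fst (c i), snd x / k + snd (c i))"
  by (simp add: usc_map_def prod_eq_iff divide_inverse mult.commute)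

lemma Psi_zero: "\<Psi> i 0 = c i"
  by (simp add: usc_map_def)

lemma dist_Psi: "dist (\<Psi> i u) (\<Psi> i v) = dist u v / k"
proof -
  have "\<Psi> i u - \<Psi> i v = (1 / k) *\<^sub>R (u - v)" by (simp add: usc_map_def algebra_simps)
  then show ?thesis using k_pos by (simp add: dist_norm)
qed

lemma lipschitz_Psi: "(1 / k)-lipschitz_on UNIV (\<Psi> i)"
  by (rule lipschitz_onI) (simp_all add: dist_Psi)

lemma Psi_image_K: "i < N \<Longrightarrow> \<Psi> i ` K \<subseteq> K"
  using K_self_similar by blast

lemma lipschitz_path_Psi:
  assumes "i < N" "lipschitz_path K L x y"
  shows "lipschitz_path K (L / k) (\<Psi> i x) (\<Psi> i y)"
  using lipschitz_path_image[OF assms(2) lipschitz_on_subset[OF lipschitz_Psi subset_UNIV] Psi_image_K[OF assms(1)]]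
  by simp

lemma cell_eq: "cell i = {fst (c i)..fst (c i) + 1 / k} \<times> {snd (c i)..snd (c i) + 1 / k}"
proof (intro set_eqI iffI)
  fix z assume "z \<in> cell i"
  then obtain x where "x \<in> unit_square" "z = \<Psi> i x" by blast
  then show "z \<in> {fst (c i)..fst (c i) + 1 / k} \<times> {snd (c i)..snd (c i) + 1 / k}"
    using k_pos by (auto simp: unit_square_def Psi_eq divide_right_mono)
next
  fix z assume z: "z \<in> {fst (c i)..fst (c i) + 1 / k} \<times> {snd (c i)..snd (c i) + 1 / k}"
  define x where "x = (k * (fst z - fst (c i)), k * (snd z - snd (c i)))"
  have "x \<in> unit_square" using z k_pos by (auto simp: x_def unit_square_def field_simps)
  moreover have "z = \<Psi> i x" using k_pos by (simp add: x_def Psi_eq prod_eq_iff)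
  ultimately show "z \<in> cell i" by blast
qed

lemma offset_bounds:
  assumes "i < N"
  shows "0 \<le> fst (c i)" "fst (c i) + 1 / k \<le> 1" "0 \<le> snd (c i)" "snd (c i) + 1 / k \<le> 1"
proof -
  have "c i \<in> cell i" "c i + (1 / k, 1 / k) \<in> cell i" using k_pos by (auto simp: cell_eq mem_Times_iff)
  then have "c i \<in> unit_square" "c i + (1 / k, 1 / k) \<in> unit_square"
    using cells_in_square assms by blast+
  then show "0 \<le> fst (c i)" "fst (c i) + 1 / k \<le> 1" "0 \<le> snd (c i)" "snd (c i) + 1 / k \<le> 1"
    by (auto simp: unit_square_def)
qed

lemma offsets_close_imp_eq:
  assumes "i < N" "j < N"
    and "\<bar>fst (c i) - fst (c j)\<bar> < 1 / k" "\<bar>snd (c i) - snd (c j)\<bar> < 1 / k"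
  shows "i = j"
proof (rule ccontr)
  assume "i \<noteq> j"
  define x0 where "x0 = max (fst (c i)) (fst (c j))"
  define y0 where "y0 = max (snd (c i)) (snd (c j))"
  define w where "w = 1 / k - \<bar>fst (c i) - fst (c j)\<bar>"
  define h where "h = 1 / k - \<bar>snd (c i) - snd (c j)\<bar>"
  have "{x0..x0 + w} \<times> {y0..y0 + h} \<subseteq> cell i \<inter> cell j"
    by (auto simp: cell_eq x0_def y0_def w_def h_def)
  moreover have "0 < w" "0 < h" using assms(3,4) by (simp_all add: w_def h_def)
  ultimately show False
    using box_not_subset_segment cells_meet[OF assms(1,2) \<open>i \<noteq> j\<close>] by blast
qed

lemma K_subset_unit_square: "K \<subseteq> unit_square"
proof (rule contraction_cover_subset[where f = \<Psi> and I = "{..<N}" and r = "1 / k"])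
  show "closed unit_square" unfolding unit_square_def by (intro closed_Times closed_real_atLeastAtMost)
  show "unit_square \<noteq> {}" by (auto simp: unit_square_def)
  show "bounded K" using K_compact by (rule compact_imp_bounded)
  show "1 / real k < 1" using k_ge_3 by simp
  show "(1 / real k)-lipschitz_on UNIV (\<Psi> i)" for i by (rule lipschitz_Psi)
  show "\<Psi> i ` unit_square \<subseteq> unit_square" if "i \<in> {..<N}" for i
    using cells_in_square that by blast
  show "K \<subseteq> (\<Union>i\<in>{..<N}. \<Psi> i ` K)" using K_self_similar by blast
qed

lemma K_in_unit_square: "x \<in> K \<Longrightarrow> 0 \<le> fst x \<and> fst x \<le> 1 \<and> 0 \<le> snd x \<and> snd x \<le> 1"
  using K_subset_unit_square by (auto simp: unit_square_def)

lemma square_boundary_in_cells: "square_boundary \<subseteq> (\<Union>i<N. cell i)"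
proof
  fix z assume z: "z \<in> square_boundary"
  have bottom: "(t, 0) \<in> (\<Union>i<N. cell i)" if "0 \<le> t" "t \<le> 1" for t
    using subsetD[OF bottom_edge_in_cells, of "(t, 0)"] that by simp
  have edge: "g (t, 0) \<in> (\<Union>i<N. cell i)" if "g \<in> square_isometries" "0 \<le> t" "t \<le> 1" for g t
    using cells_symmetric[OF that(1)] bottom[OF that(2,3)] by blast
  have "(\<lambda>(x, y). (x, 1 - y)) \<in> square_isometries" "(\<lambda>(x, y). (y, x)) \<in> square_isometries"
    "(\<lambda>(x, y). (1 - y, x)) \<in> square_isometries"
    by (simp_all add: square_isometries_def)
  from edge[OF this(1)] edge[OF this(2)] edge[OF this(3)]
  show "z \<in> (\<Union>i<N. cell i)"
    using z bottom by (cases z) (auto simp: square_boundary_def unit_square_def)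
qed

lemma Psi_in_square_boundary_iff:
  assumes "w \<in> unit_square"
  shows "w \<in> square_boundary \<longleftrightarrow>
    fst (\<Psi> i w) \<in> {fst (c i), fst (c i) + 1 / k} \<or> snd (\<Psi> i w) \<in> {snd (c i), snd (c i) + 1 / k}"
  using assms k_pos by (auto simp: square_boundary_def Psi_eq divide_cancel_right)

lemma square_boundary_self_similar: "square_boundary \<subseteq> (\<Union>i<N. \<Psi> i ` square_boundary)"
proof
  fix z assume z: "z \<in> square_boundary"
  then obtain i w where i: "i < N" "w \<in> unit_square" "z = \<Psi> i w"
    using square_boundary_in_cells by blast
  have "z \<in> cell i" using i by blast
  then have "fst z \<in> {fst (c i), fst (c i) + 1 / k} \<or> snd z \<in> {snd (c i), snd (c i) + 1 / k}"
    using z offset_bounds[OF i(1)] by (auto simp: square_boundary_def cell_eq)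
  then have "w \<in> square_boundary" using Psi_in_square_boundary_iff[OF i(2)] i(3) by simp
  then show "z \<in> (\<Union>i<N. \<Psi> i ` square_boundary)" using i by blast
qed

lemma square_boundary_subset_K: "square_boundary \<subseteq> K"
proof (rule contraction_cover_subset[where f = \<Psi> and I = "{..<N}" and r = "1 / k"])
  show "closed K" using K_compact by (rule compact_imp_closed)
  show "bounded square_boundary"
    by (rule bounded_subset[of unit_square])
      (auto simp: unit_square_def square_boundary_def intro: bounded_Times)
  show "1 / real k < 1" using k_ge_3 by simp
  show "(1 / real k)-lipschitz_on UNIV (\<Psi> i)" for i by (rule lipschitz_Psi)
qed (use K_nonempty Psi_image_K square_boundary_self_similar in auto)

lemma lipschitz_path_along_edge:
  assumes "a \<in> square_boundary" "b \<in> square_boundary"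
    and "fst a = fst b \<and> fst a \<in> {0, 1} \<or> snd a = snd b \<and> snd a \<in> {0, 1}"
  shows "lipschitz_path K 1 a b"
proof (rule lipschitz_path_mono)
  show "lipschitz_path K (dist a b) a b"
    using closed_segment_square_boundary[OF assms] square_boundary_subset_K
    by (intro lipschitz_path_linepath) blast
  show "dist a b \<le> 1"
    using assms by (intro dist_on_square_edge) (auto simp: square_boundary_def)
qed

lemma lipschitz_path_boundary_origin:
  assumes p: "p \<in> square_boundary"
  shows "lipschitz_path K 2 p 0"
proof -
  have corners: "(0, 0) \<in> square_boundary" "(1, 0) \<in> square_boundary" "(0, 1) \<in> square_boundary"
    by (simp_all add: square_boundary_def unit_square_def)
  consider "fst p = 0 \<or> snd p = 0" | "fst p = 1" | "snd p = 1"
    using p by (auto simp: square_boundary_def)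
  then show ?thesis
  proof cases
    case 1
    then have "lipschitz_path K 1 p (0, 0)"
      using lipschitz_path_along_edge[OF p corners(1)] by auto
    then show ?thesis by (simp add: zero_prod_def lipschitz_path_mono)
  next
    case 2
    then have "lipschitz_path K 1 p (1, 0)" using lipschitz_path_along_edge[OF p corners(2)] by auto
    moreover have "lipschitz_path K 1 (1, 0) (0, 0)" using lipschitz_path_along_edge[OF corners(2,1)] by simp
    ultimately show ?thesis using lipschitz_path_trans by (fastforce simp: zero_prod_def)
  next
    case 3
    then have "lipschitz_path K 1 p (0, 1)" using lipschitz_path_along_edge[OF p corners(3)] by auto
    moreover have "lipschitz_path K 1 (0, 1) (0, 0)" using lipschitz_path_along_edge[OF corners(3,1)] by simp
    ultimately show ?thesis using lipschitz_path_trans by (fastforce simp: zero_prod_def)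
  qed
qed

lemma common_point_on_cell_boundary:
  assumes "i < N" "j < N" "i \<noteq> j" and z: "z \<in> cell i" "z \<in> cell j"
  shows "z \<in> \<Psi> i ` square_boundary"
proof -
  obtain w where w: "w \<in> unit_square" "z = \<Psi> i w" using z(1) by blast
  have "fst z \<in> {fst (c i), fst (c i) + 1 / k} \<or> snd z \<in> {snd (c i), snd (c i) + 1 / k}"
  proof (rule ccontr)
    assume "\<not> ?thesis"
    then have "\<bar>fst (c i) - fst (c j)\<bar> < 1 / k" "\<bar>snd (c i) - snd (c j)\<bar> < 1 / k"
      using z by (auto simp: cell_eq)
    then show False using offsets_close_imp_eq assms(1-3) by blast
  qed
  then have "w \<in> square_boundary" using Psi_in_square_boundary_iff[OF w(1)] w(2) by simp
  then show ?thesis using w(2) by blast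
qed

lemma lipschitz_path_cell_boundary_offset:
  assumes "i < N" "p \<in> square_boundary"
  shows "lipschitz_path K (2 / k) (\<Psi> i p) (c i)"
  using lipschitz_path_Psi[OF assms(1) lipschitz_path_boundary_origin[OF assms(2)]] by (simp add: Psi_zero)

lemma offset_joined_to_origin:
  assumes "i < N"
  shows "\<exists>L. lipschitz_path K L (c i) 0"
proof -
  obtain i0 w where i0: "i0 < N" "w \<in> square_boundary" "0 = \<Psi> i0 w"
    using square_boundary_self_similar zero_in_square_boundary by blast
  have step: "\<exists>L. lipschitz_path K L (c j) 0"
    if ij: "i < N" "j < N" and L: "lipschitz_path K L (c i) 0" and "cell i \<inter> cell j \<noteq> {}" for i j L
  proof (cases "i = j")
    case False
    obtain z where z: "z \<in> cell i" "z \<in> cell j" using \<open>cell i \<inter> cell j \<noteq> {}\<close> by blast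
    obtain v where "v \<in> square_boundary" "z = \<Psi> i v"
      using common_point_on_cell_boundary[OF ij False z] by blast
    then have zi: "lipschitz_path K (2 / k) z (c i)" using lipschitz_path_cell_boundary_offset ij(1) by blast
    obtain v' where "v' \<in> square_boundary" "z = \<Psi> j v'"
      using common_point_on_cell_boundary[OF ij(2,1) False[symmetric] z(2,1)] by blast
    then have zj: "lipschitz_path K (2 / k) z (c j)" using lipschitz_path_cell_boundary_offset ij(2) by blast
    show ?thesis using lipschitz_path_trans[OF lipschitz_path_trans[OF lipschitz_path_sym[OF zj] zi] L] by blast
  qed (use L in blast)
  have "\<exists>L. lipschitz_path K L (c i0) 0"
    using lipschitz_path_sym[OF lipschitz_path_cell_boundary_offset[OF i0(1,2)]] i0(3) by auto
  moreover have "closed (cell i)" "cell i \<noteq> {}" for i using k_pos by (auto simp: cell_eq closed_Times)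
  ultimately show ?thesis
    using connected_closed_cover_propagate[where A = cell and I = "{..<N}" and s = i0
        and P = "\<lambda>i. \<exists>L. lipschitz_path K L (c i) 0"] cells_connected i0(1) assms step
    by blast
qed

lemma K_joined_to_origin: "\<exists>D. \<forall>x\<in>K. lipschitz_path K D x 0"
proof -
  have "\<forall>i\<in>{..<N}. \<exists>L. lipschitz_path K L 0 (c i)"
    using offset_joined_to_origin lipschitz_path_sym by blast
  then obtain L where L: "\<And>i. i < N \<Longrightarrow> lipschitz_path K (L i) 0 (c i)" by (metis lessThan_iff bchoice)
  define E where "E = (\<Sum>i<N. L i)"
  have E: "lipschitz_path K E 0 (\<Psi> i 0)" if "i < N" for i
    using L[OF that] lipschitz_path_nonneg[OF L] that
    by (auto simp: E_def Psi_zero intro: lipschitz_path_mono member_le_sum)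
  have "0 \<in> K" using square_boundary_subset_K zero_in_square_boundary by blast
  have "lipschitz_path K (E / (1 - 1 / k)) 0 x" if "x \<in> K" for x
  proof (rule lipschitz_path_attractor[where f = \<Psi> and I = "{..<N}" and r = "1 / k"])
    show "closed K" "bounded K" using K_compact by (simp_all add: compact_imp_closed compact_imp_bounded)
    show "K = (\<Union>i\<in>{..<N}. \<Psi> i ` K)" by (rule K_self_similar)
    show "1 / real k < 1" using k_ge_3 by simp
    show "(1 / real k)-lipschitz_on UNIV (\<Psi> i)" for i by (rule lipschitz_Psi)
  qed (use that E \<open>0 \<in> K\<close> in auto)
  then show ?thesis using lipschitz_path_sym by blast
qed

lemma usc_square_isometry:
  assumes g: "g \<in> square_isometries"
  shows "usc k N (\<lambda>i. g (c i) - (1 / k) *\<^sub>R g 0) (g ` K)"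
proof
  \<comment> \<open>\<open>g\<close> is affine, so \<open>g (x / k + c i) = g x / k + c' i\<close>: the image of the pattern under \<open>g\<close> is the
    pattern with offsets \<open>c'\<close>, and \<open>g ` K\<close> is its attractor.\<close>
  define c' where "c' i = g (c i) - (1 / k) *\<^sub>R g 0" for i
  have Psi': "usc_map k c' i (g x) = g (\<Psi> i x)" for i x
    unfolding c'_def by (rule usc_map_square_isometry[OF g])
  have cell': "usc_map k c' i ` unit_square = g ` cell i" for i
    by (subst square_isometry_unit_square[OF g, symmetric]) (simp add: image_image Psi')
  have cells': "(\<Union>i<N. g ` cell i) = (\<Union>i<N. cell i)"
    using cells_symmetric[OF g] by (simp add: image_UN)
  have meet: "\<forall>i<N. \<forall>j<N. i \<noteq> j \<longrightarrow> is_segment (g ` cell i \<inter> g ` cell j) \<or>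
      (\<exists>p. g ` cell i \<inter> g ` cell j = {p}) \<or> g ` cell i \<inter> g ` cell j = {}"
    using square_isometry_segment_or_point[OF g cells_meet]
    by (simp add: image_Int[OF square_isometry_inj[OF g], symmetric])
  have "continuous_on UNIV g"
    using square_isometry_dist[OF g] by (intro lipschitz_on_continuous_on[of 1]) (simp add: lipschitz_on_def)
  then have "compact (g ` K)"
    using compact_continuous_image[OF continuous_on_subset K_compact] by blast
  have K': "g ` K = (\<Union>i<N. usc_map k c' i ` g ` K)"
    by (subst K_self_similar) (simp add: image_UN image_image Psi')
  have N_lower: "4 * (k - 1) \<le> N" using usc unfolding USC_def by (elim conjE)
  have N_upper: "N \<le> k\<^sup>2 - 1" using usc unfolding USC_def by (elim conjE)
  have symmetric: "\<forall>h\<in>square_isometries. h ` (\<Union>i<N. cell i) = (\<Union>i<N. cell i)"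
    by (simp add: cells_symmetric)
  have "g ` K \<noteq> {}" using K_nonempty by simp
  show "USC k N (\<lambda>i. g (c i) - (1 / k) *\<^sub>R g 0) (g ` K)"
    unfolding USC_def Let_def c'_def[symmetric] cell' cells'
    by (intro conjI)
      (fact k_ge_3 N_lower N_upper meet cells_connected symmetric bottom_edge_in_cells cells_in_square
        \<open>compact (g ` K)\<close> \<open>g ` K \<noteq> {}\<close> K')+
qed

lemma bottom_row_offset:
  assumes i: "i < N" and low: "snd (c i) < 1 / k"
  shows "snd (c i) = 0"
proof (rule ccontr)
  assume nonzero: "snd (c i) \<noteq> 0"
  define t where "t = fst (c i) + 1 / (2 * k)"
  have "0 \<le> t" "t \<le> 1" using offset_bounds[OF i] k_pos by (simp_all add: t_def field_simps)
  then obtain j where j: "j < N" "(t, 0) \<in> cell j"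
    using subsetD[OF bottom_edge_in_cells, of "(t, 0)"] by auto
  then have "snd (c j) = 0" "fst (c j) \<le> t" "t \<le> fst (c j) + 1 / k"
    using offset_bounds[OF j(1)] by (auto simp: cell_eq)
  moreover have "1 / (2 * k) < 1 / k" using k_pos by (simp add: field_simps)
  ultimately have "\<bar>fst (c i) - fst (c j)\<bar> < 1 / k" "\<bar>snd (c i) - snd (c j)\<bar> < 1 / k"
    using low offset_bounds[OF i] by (auto simp: t_def abs_less_iff)
  then have "i = j" using offsets_close_imp_eq[OF i j(1)] by blast
  then show False using nonzero \<open>snd (c j) = 0\<close> by simp
qed

lemma K_joined_to_feet:
  obtains D where "0 \<le> D" "\<And>x. x \<in> K \<Longrightarrow> lipschitz_path K D x (fst x, 0)"
proof -
  obtain D where D: "\<And>x. x \<in> K \<Longrightarrow> lipschitz_path K D x 0" using K_joined_to_origin by blast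
  have "lipschitz_path K (D + 2) x (fst x, 0)" if "x \<in> K" for x
  proof -
    have "(fst x, 0) \<in> square_boundary"
      using K_in_unit_square[OF that] by (simp add: square_boundary_def unit_square_def)
    then show ?thesis
      using lipschitz_path_trans[OF D[OF that] lipschitz_path_sym[OF lipschitz_path_boundary_origin]] by blast
  qed
  moreover have "0 \<le> D + 2" using D K_nonempty lipschitz_path_nonneg by fastforce
  ultimately show thesis using that by blast
qed

lemma lipschitz_path_to_foot:
  obtains C where "0 \<le> C" "\<And>x. x \<in> K \<Longrightarrow> lipschitz_path K (C * snd x) x (fst x, 0)"
proof -
  obtain D where D: "0 \<le> D" "\<And>x. x \<in> K \<Longrightarrow> lipschitz_path K D x (fst x, 0)"
    using K_joined_to_feet by blast
  define C where "C = D * k"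
  have "lipschitz_path K (C * snd x) x (fst x, 0)" if "x \<in> K" for x
  proof (rule scale_induct[where P = "\<lambda>x. x \<in> K" and h = snd and r = "1 / k" and B = 1
        and Q = "\<lambda>x. lipschitz_path K (C * snd x) x (fst x, 0)"])
    show "0 < 1 / real k" "1 / real k < 1" using k_ge_3 by simp_all
    show "snd x \<le> 1" if "x \<in> K" for x using K_in_unit_square[OF that] by simp
  next
    fix x assume "x \<in> K" "snd x \<le> 0"
    then have "snd x = 0" using K_in_unit_square[of x] by simp
    then have "(fst x, 0) = x" by (simp add: prod_eq_iff)
    then show "lipschitz_path K (C * snd x) x (fst x, 0)"
      using lipschitz_path_refl[OF \<open>x \<in> K\<close>] \<open>snd x = 0\<close> by simp
  next
    fix x assume x: "x \<in> K" "0 < snd x"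
      and IH: "\<And>y. y \<in> K \<Longrightarrow> snd x \<le> 1 / k * snd y \<Longrightarrow> lipschitz_path K (C * snd y) y (fst y, 0)"
    show "lipschitz_path K (C * snd x) x (fst x, 0)"
    proof (cases "1 / k \<le> snd x")
      case True
      then have "D * 1 \<le> D * (k * snd x)"
        using k_pos D(1) by (intro mult_left_mono) (simp_all add: field_simps)
      then show ?thesis using D(2)[OF x(1)] by (simp add: C_def mult.assoc lipschitz_path_mono)
    next
      case False
      obtain i y where i: "i < N" "y \<in> K" "x = \<Psi> i y" using x(1) K_self_similar by blast
      then have "snd x = snd y / k + snd (c i)" by (simp add: Psi_eq)
      moreover have "0 \<le> snd y / k" using K_in_unit_square[OF i(2)] k_pos by simp
      ultimately have "snd (c i) = 0" using False bottom_row_offset[OF i(1)] by simp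
      then have "snd x = 1 / k * snd y" "\<Psi> i (fst y, 0) = (fst x, 0)"
        using i(3) by (simp_all add: Psi_eq)
      then show ?thesis using lipschitz_path_Psi[OF i(1) IH[OF i(2)]] i(3) by simp
    qed
  qed (rule that)
  then show thesis using that[of C] D(1) by (simp add: C_def)
qed

lemma lipschitz_path_to_bottom_edge:
  obtains C where "0 \<le> C"
    "\<And>x p. x \<in> K \<Longrightarrow> p \<in> square_boundary \<Longrightarrow> snd p = 0 \<Longrightarrow> lipschitz_path K (C * dist x p) x p"
proof -
  obtain C where C: "0 \<le> C" "\<And>x. x \<in> K \<Longrightarrow> lipschitz_path K (C * snd x) x (fst x, 0)"
    using lipschitz_path_to_foot by blast
  have "lipschitz_path K ((C + 1) * dist x p) x p"
    if x: "x \<in> K" and p: "p \<in> square_boundary" "snd p = 0" for x p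
  proof -
    have foot: "(fst x, 0) \<in> square_boundary"
      using K_in_unit_square[OF x] by (simp add: square_boundary_def unit_square_def)
    have "closed_segment (fst x, 0) p \<subseteq> K"
      using closed_segment_square_boundary[OF foot p(1)] p(2) square_boundary_subset_K by auto
    then have "lipschitz_path K (dist (fst x, 0) p) (fst x, 0) p" by (rule lipschitz_path_linepath)
    then have "lipschitz_path K (C * snd x + dist (fst x, 0) p) x p"
      by (rule lipschitz_path_trans[OF C(2)[OF x]])
    moreover have "snd x \<le> dist x p" "dist (fst x, 0) p \<le> dist x p"
      using p(2) K_in_unit_square[OF x] dist_snd_le[of x p] dist_fst_le[of x p]
      by (auto simp: dist_prod_def dist_real_def)
    then have "C * snd x + dist (fst x, 0) p \<le> (C + 1) * dist x p"
      using C(1) by (simp add: distrib_right mult_left_mono add_mono)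
    ultimately show ?thesis by (rule lipschitz_path_mono)
  qed
  then show thesis using that[of "C + 1"] C(1) by simp
qed

lemma lipschitz_path_to_boundary_edge:
  assumes g: "g \<in> square_isometries" and involution: "\<And>x. g (g x) = x"
  obtains C where "0 \<le> C"
    "\<And>x p. x \<in> K \<Longrightarrow> p \<in> square_boundary \<Longrightarrow> snd (g p) = 0 \<Longrightarrow> lipschitz_path K (C * dist x p) x p"
proof -
  interpret reflected: usc k N "\<lambda>i. g (c i) - (1 / k) *\<^sub>R g 0" "g ` K"
    by (rule usc_square_isometry[OF g])
  obtain C where C: "0 \<le> C" "\<And>x p. x \<in> g ` K \<Longrightarrow> p \<in> square_boundary \<Longrightarrow> snd p = 0
      \<Longrightarrow> lipschitz_path (g ` K) (C * dist x p) x p"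
    using reflected.lipschitz_path_to_bottom_edge by blast
  have g_lip: "1-lipschitz_on (g ` K) g" by (simp add: lipschitz_on_def square_isometry_dist[OF g])
  have "g ` g ` K = K" by (simp add: image_image involution)
  have "lipschitz_path K (C * dist x p) x p"
    if "x \<in> K" "p \<in> square_boundary" "snd (g p) = 0" for x p
  proof -
    have "g p \<in> square_boundary" using square_isometry_square_boundary[OF g] that(2) by blast
    then have "lipschitz_path (g ` K) (C * dist (g x) (g p)) (g x) (g p)" using C(2) that by blast
    from lipschitz_path_image[OF this g_lip] show ?thesis
      using \<open>g ` g ` K = K\<close> by (simp add: involution square_isometry_dist[OF g])
  qed
  then show thesis using that C(1) by blast
qed

lemma lipschitz_path_to_boundary:
  obtains C where "0 \<le> C" "\<And>x p. x \<in> K \<Longrightarrow> p \<in> square_boundary \<Longrightarrow> lipschitz_path K (C * dist x p) x p"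
proof -
  \<comment> \<open>Each of these involutions maps one edge of the square onto the bottom edge.\<close>
  define G :: "(pt \<Rightarrow> pt) set"
    where "G = {\<lambda>(x, y). (x, y), \<lambda>(x, y). (x, 1 - y), \<lambda>(x, y). (y, x), \<lambda>(x, y). (1 - y, 1 - x)}"
  have "G \<subseteq> square_isometries" by (auto simp: G_def square_isometries_def)
  have "\<forall>g\<in>G. \<exists>C. 0 \<le> C \<and> (\<forall>x\<in>K. \<forall>p\<in>square_boundary.
      snd (g p) = 0 \<longrightarrow> lipschitz_path K (C * dist x p) x p)"
  proof
    fix g assume "g \<in> G"
    have "g \<in> square_isometries" using \<open>g \<in> G\<close> \<open>G \<subseteq> square_isometries\<close> by blast
    moreover have "g (g x) = x" for x using \<open>g \<in> G\<close> by (cases x) (auto simp: G_def)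
    ultimately obtain C where "0 \<le> C" "\<And>x p. x \<in> K \<Longrightarrow> p \<in> square_boundary \<Longrightarrow> snd (g p) = 0
        \<Longrightarrow> lipschitz_path K (C * dist x p) x p"
      by (rule lipschitz_path_to_boundary_edge) auto
    then show "\<exists>C. 0 \<le> C \<and> (\<forall>x\<in>K. \<forall>p\<in>square_boundary.
        snd (g p) = 0 \<longrightarrow> lipschitz_path K (C * dist x p) x p)"
      by blast
  qed
  from bchoice[OF this] obtain C where C: "\<forall>g\<in>G. 0 \<le> C g \<and> (\<forall>x\<in>K. \<forall>p\<in>square_boundary.
      snd (g p) = 0 \<longrightarrow> lipschitz_path K (C g * dist x p) x p)"
    by blast
  have "lipschitz_path K ((\<Sum>g\<in>G. C g) * dist x p) x p" if "x \<in> K" "p \<in> square_boundary" for x p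
  proof -
    have "\<exists>g\<in>G. snd (g p) = 0" using that(2) by (cases p) (auto simp: G_def square_boundary_def)
    then obtain g where "g \<in> G" "snd (g p) = 0" by blast
    then have "lipschitz_path K (C g * dist x p) x p" using C that by blast
    moreover have "C g \<le> (\<Sum>g\<in>G. C g)"
      using \<open>g \<in> G\<close> C by (intro member_le_sum) (auto simp: G_def)
    then have "C g * dist x p \<le> (\<Sum>g\<in>G. C g) * dist x p" by (rule mult_right_mono) simp
    ultimately show ?thesis by (rule lipschitz_path_mono)
  qed
  moreover have "0 \<le> (\<Sum>g\<in>G. C g)" using C by (simp add: sum_nonneg)
  ultimately show thesis using that by blast
qed

lemma cell_gap:
  obtains \<delta> where "0 < \<delta>"
    "\<And>i j x y. i < N \<Longrightarrow> j < N \<Longrightarrow> cell i \<inter> cell j = {} \<Longrightarrow> x \<in> cell i \<Longrightarrow> y \<in> cell j \<Longrightarrow> \<delta> \<le> dist x y"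
proof -
  have "\<exists>\<delta>>0. \<forall>ij\<in>{(i, j). i < N \<and> j < N \<and> cell i \<inter> cell j = {}}.
      \<forall>x\<in>cell (fst ij). \<forall>y\<in>cell (snd ij). \<delta> \<le> dist x y"
  proof (rule finite_uniform_positive)
    show "finite {(i, j). i < N \<and> j < N \<and> cell i \<inter> cell j = {}}"
      by (rule finite_subset[of _ "{..<N} \<times> {..<N}"]) auto
    show "\<exists>\<delta>>0. \<forall>x\<in>cell (fst ij). \<forall>y\<in>cell (snd ij). \<delta> \<le> dist x y"
      if "ij \<in> {(i, j). i < N \<and> j < N \<and> cell i \<inter> cell j = {}}" for ij
    proof (rule separate_compact_closed)
      show "compact (cell (fst ij))" "closed (cell (snd ij))"
        by (simp_all add: cell_eq compact_Times closed_Times)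
      show "cell (fst ij) \<inter> cell (snd ij) = {}" using that by (cases ij) simp
    qed
  qed (fastforce)
  then obtain \<delta> where \<delta>: "0 < \<delta>" and gap: "\<And>ij x y. ij \<in> {(i, j). i < N \<and> j < N \<and> cell i \<inter> cell j = {}}
      \<Longrightarrow> x \<in> cell (fst ij) \<Longrightarrow> y \<in> cell (snd ij) \<Longrightarrow> \<delta> \<le> dist x y"
    by blast
  show thesis
  proof (rule that[OF \<delta>])
    fix i j x y assume "i < N" "j < N" "cell i \<inter> cell j = {}" "x \<in> cell i" "y \<in> cell j"
    then show "\<delta> \<le> dist x y" using gap[of "(i, j)" x y] by simp
  qed
qed

lemma closest_common_point:
  assumes "x \<in> cell i" "y \<in> cell j" "cell i \<inter> cell j \<noteq> {}"
  shows "\<exists>p\<in>cell i \<inter> cell j. dist x p \<le> dist x y"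
  using box_closest_common_point assms unfolding cell_eq by blast

lemma lipschitz_path_across_cells:
  assumes CB: "0 \<le> CB" "\<And>x p. x \<in> K \<Longrightarrow> p \<in> square_boundary \<Longrightarrow> lipschitz_path K (CB * dist x p) x p"
    and ij: "i < N" "j < N" "i \<noteq> j" "cell i \<inter> cell j \<noteq> {}" and "x \<in> K" "y \<in> K"
  shows "lipschitz_path K (3 * CB * dist (\<Psi> i x) (\<Psi> j y)) (\<Psi> i x) (\<Psi> j y)"
proof -
  have "\<Psi> i x \<in> cell i" "\<Psi> j y \<in> cell j" using \<open>x \<in> K\<close> \<open>y \<in> K\<close> K_subset_unit_square by blast+
  then obtain p where p: "p \<in> cell i" "p \<in> cell j" "dist (\<Psi> i x) p \<le> dist (\<Psi> i x) (\<Psi> j y)"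
    using closest_common_point[of "\<Psi> i x" i "\<Psi> j y" j] ij(4) by auto
  have to_p: "lipschitz_path K (CB * dist (\<Psi> l z) p) (\<Psi> l z) p"
    if l: "l < N" "z \<in> K" "p \<in> \<Psi> l ` square_boundary" for l z
  proof -
    obtain w where "w \<in> square_boundary" "p = \<Psi> l w" using l(3) by blast
    then show ?thesis using lipschitz_path_Psi[OF l(1) CB(2)[OF l(2)]] by (simp add: dist_Psi)
  qed
  have "lipschitz_path K (CB * dist (\<Psi> i x) p) (\<Psi> i x) p"
    by (rule to_p[OF ij(1) \<open>x \<in> K\<close> common_point_on_cell_boundary[OF ij(1-3) p(1,2)]])
  moreover have "lipschitz_path K (CB * dist (\<Psi> j y) p) (\<Psi> j y) p"
    by (rule to_p[OF ij(2) \<open>y \<in> K\<close> common_point_on_cell_boundary[OF ij(2,1) ij(3)[symmetric] p(2,1)]])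
  ultimately have "lipschitz_path K (CB * dist (\<Psi> i x) p + CB * dist (\<Psi> j y) p) (\<Psi> i x) (\<Psi> j y)"
    by (blast intro: lipschitz_path_trans lipschitz_path_sym)
  moreover have "dist (\<Psi> j y) p \<le> dist (\<Psi> j y) (\<Psi> i x) + dist (\<Psi> i x) p" by (rule dist_triangle)
  then have "dist (\<Psi> i x) p + dist (\<Psi> j y) p \<le> 3 * dist (\<Psi> i x) (\<Psi> j y)"
    using p(3) by (simp add: dist_commute)
  then have "CB * dist (\<Psi> i x) p + CB * dist (\<Psi> j y) p \<le> 3 * CB * dist (\<Psi> i x) (\<Psi> j y)"
    using mult_left_mono[OF _ CB(1)] by (fastforce simp: distrib_left[symmetric])
  ultimately show ?thesis by (rule lipschitz_path_mono)
qed

lemma lipschitz_path_distinct_cells: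
  obtains C where "0 < C" "\<And>i j x y. i < N \<Longrightarrow> j < N \<Longrightarrow> i \<noteq> j \<Longrightarrow> x \<in> K \<Longrightarrow> y \<in> K
    \<Longrightarrow> lipschitz_path K (C * dist (\<Psi> i x) (\<Psi> j y)) (\<Psi> i x) (\<Psi> j y)"
proof -
  obtain CB where CB: "0 \<le> CB"
    "\<And>x p. x \<in> K \<Longrightarrow> p \<in> square_boundary \<Longrightarrow> lipschitz_path K (CB * dist x p) x p"
    using lipschitz_path_to_boundary by blast
  obtain D where D: "\<And>x. x \<in> K \<Longrightarrow> lipschitz_path K D x 0" using K_joined_to_origin by blast
  have "0 \<le> D" using D K_nonempty lipschitz_path_nonneg by blast
  obtain \<delta> where \<delta>: "0 < \<delta>" "\<And>i j x y. i < N \<Longrightarrow> j < N \<Longrightarrow> cell i \<inter> cell j = {}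
      \<Longrightarrow> x \<in> cell i \<Longrightarrow> y \<in> cell j \<Longrightarrow> \<delta> \<le> dist x y"
    using cell_gap by blast
  define C where "C = 3 * CB + 2 * D / \<delta> + 1"
  have "lipschitz_path K (C * dist (\<Psi> i x) (\<Psi> j y)) (\<Psi> i x) (\<Psi> j y)"
    if ij: "i < N" "j < N" "i \<noteq> j" and "x \<in> K" "y \<in> K" for i j x y
  proof (cases "cell i \<inter> cell j = {}")
    case True
    have "\<Psi> i x \<in> cell i" "\<Psi> j y \<in> cell j" using \<open>x \<in> K\<close> \<open>y \<in> K\<close> K_subset_unit_square by blast+
    then have "\<delta> \<le> dist (\<Psi> i x) (\<Psi> j y)" using \<delta>(2) ij(1,2) True by blast
    then have "2 * D \<le> 2 * D / \<delta> * dist (\<Psi> i x) (\<Psi> j y)"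
      using \<delta>(1) \<open>0 \<le> D\<close> by (simp add: field_simps mult_left_mono)
    also have "\<dots> \<le> C * dist (\<Psi> i x) (\<Psi> j y)"
      using CB(1) by (intro mult_right_mono) (simp_all add: C_def)
    finally have "D + D \<le> C * dist (\<Psi> i x) (\<Psi> j y)" by simp
    moreover have "lipschitz_path K (D + D) (\<Psi> i x) (\<Psi> j y)"
      using lipschitz_path_trans[OF D lipschitz_path_sym[OF D]] Psi_image_K ij(1,2) \<open>x \<in> K\<close> \<open>y \<in> K\<close> by blast
    ultimately show ?thesis by (rule lipschitz_path_mono[rotated])
  next
    case False
    then have "lipschitz_path K (3 * CB * dist (\<Psi> i x) (\<Psi> j y)) (\<Psi> i x) (\<Psi> j y)"
      using lipschitz_path_across_cells[OF CB ij] \<open>x \<in> K\<close> \<open>y \<in> K\<close> by simp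
    moreover have "3 * CB * dist (\<Psi> i x) (\<Psi> j y) \<le> C * dist (\<Psi> i x) (\<Psi> j y)"
      using \<open>0 \<le> D\<close> \<delta>(1) by (intro mult_right_mono) (simp_all add: C_def)
    ultimately show ?thesis by (rule lipschitz_path_mono)
  qed
  moreover have "0 < C" using CB(1) \<open>0 \<le> D\<close> \<delta>(1) by (simp add: C_def add_nonneg_pos)
  ultimately show thesis using that by blast
qed

lemma lipschitz_path_bi_lipschitz:
  obtains C where "0 < C" "\<And>x y. x \<in> K \<Longrightarrow> y \<in> K \<Longrightarrow> lipschitz_path K (C * dist x y) x y"
proof -
  obtain C where "0 < C" and distinct: "\<And>i j x y. i < N \<Longrightarrow> j < N \<Longrightarrow> i \<noteq> j \<Longrightarrow> x \<in> K \<Longrightarrow> y \<in> K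
    \<Longrightarrow> lipschitz_path K (C * dist (\<Psi> i x) (\<Psi> j y)) (\<Psi> i x) (\<Psi> j y)"
    using lipschitz_path_distinct_cells by blast
  have pairs: "lipschitz_path K (C * dist (fst z) (snd z)) (fst z) (snd z)" if "fst z \<in> K \<and> snd z \<in> K" for z
  proof (rule scale_induct[where P = "\<lambda>z. fst z \<in> K \<and> snd z \<in> K" and h = "\<lambda>z. dist (fst z) (snd z)"
        and r = "1 / k" and B = "diameter K"
        and Q = "\<lambda>z. lipschitz_path K (C * dist (fst z) (snd z)) (fst z) (snd z)"])
    show "0 < 1 / real k" "1 / real k < 1" using k_ge_3 by simp_all
    show "dist (fst z) (snd z) \<le> diameter K" if "fst z \<in> K \<and> snd z \<in> K" for z
      using that K_compact by (simp add: diameter_bounded_bound compact_imp_bounded)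
    show "lipschitz_path K (C * dist (fst z) (snd z)) (fst z) (snd z)"
      if "fst z \<in> K \<and> snd z \<in> K" "dist (fst z) (snd z) \<le> 0" for z
      using that lipschitz_path_refl by simp
  next
    fix z :: "pt \<times> pt" assume z: "fst z \<in> K \<and> snd z \<in> K"
      and IH: "\<And>z'. fst z' \<in> K \<and> snd z' \<in> K \<Longrightarrow> dist (fst z) (snd z) \<le> 1 / k * dist (fst z') (snd z')
        \<Longrightarrow> lipschitz_path K (C * dist (fst z') (snd z')) (fst z') (snd z')"
    obtain i x where x: "i < N" "x \<in> K" "fst z = \<Psi> i x" using z K_self_similar by blast
    obtain j y where y: "j < N" "y \<in> K" "snd z = \<Psi> j y" using z K_self_similar by blast
    show "lipschitz_path K (C * dist (fst z) (snd z)) (fst z) (snd z)"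
    proof (cases "i = j")
      case True
      then have "dist (fst z) (snd z) = 1 / k * dist x y" using x(3) y(3) by (simp add: dist_Psi)
      then have "lipschitz_path K (C * dist x y) x y" using IH[of "(x, y)"] x(2) y(2) by simp
      from lipschitz_path_Psi[OF x(1) this] show ?thesis
        using True x(3) y(3) by (simp add: dist_Psi)
    qed (use distinct x y in simp)
  qed (rule that)
  show thesis
  proof (rule that[OF \<open>0 < C\<close>])
    fix x y assume "x \<in> K" "y \<in> K"
    then show "lipschitz_path K (C * dist x y) x y" using pairs[of "(x, y)"] by simp
  qed
qed

end

theorem lemma5p1:
  fixes k N :: nat and c :: "nat \<Rightarrow> real \<times> real" and K :: "(real \<times> real) set"
  assumes "USC k N c K"
  shows "\<exists>C::real. 0 < C \<and>
           (\<forall>x\<in>K. \<forall>y\<in>K. ereal (dist x y) \<le> geodesic_dist K x y \<and>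
                          geodesic_dist K x y \<le> ereal (C * dist x y))"
proof -
  interpret usc k N c K by (rule usc.intro[OF assms])
  obtain C where "0 < C" "\<And>x y. x \<in> K \<Longrightarrow> y \<in> K \<Longrightarrow> lipschitz_path K (C * dist x y) x y"
    using lipschitz_path_bi_lipschitz by blast
  then show ?thesis
    using dist_le_geodesic_dist geodesic_dist_le_lipschitz_path by blast
qed

end
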